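(* Let $m\ge 2$ be an integer and $e=3^h-1$, where $1\le h\le m-1$. The ternary cyclic code $\mathcal{C}_{(1,e)}$ has parameters $[3^m-1,\,3^m-1-2m,\,4]$ if and only if (A) $\gcd(h,m)=1$; and (B) $\gcd(3^h-2,3^m-1)=1$.
   Context: Let $q=3^m$, $n=q-1$, $\alpha$ a generator of $\mathrm{GF}(q)^*$, and $m_a(x)$ the minimal polynomial of $a\in\mathrm{GF}(q)$ over $\mathrm{GF}(3)$. $C_j$ denotes the $3$-cyclotomic coset modulo $n$ containing $j$, i.e. $\{j,3j,3^2j,\dots\}$ mod $n$. For $1<e<q-1$ with $e\notin C_1$, $\mathcal{C}_{(1,e)}$ is the cyclic code of length $n$ over $\mathrm{GF}(3)$ with generator polynomial $m_\alpha(x)m_{\alpha^e}(x)$. *)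

theory Defs
  imports "HOL-Computational_Algebra.Polynomial"
begin

text \<open>GF(3) realised as the prime subfield of a finite field 'a of order 3^m.\<close>
definition prime_subfield :: "'a::field set" where
  "prime_subfield = range (of_nat :: nat \<Rightarrow> 'a)"

definition over_gf3 :: "'a::field poly \<Rightarrow> bool" where
  "over_gf3 p \<longleftrightarrow> (\<forall>i. coeff p i \<in> prime_subfield)"

definition is_primitive :: "'a::{field,finite} \<Rightarrow> bool" where
  "is_primitive a \<longleftrightarrow> (\<lambda>i. a ^ i) ` {..<card (UNIV :: 'a set) - 1} = UNIV - {0}"

definition minpoly3 :: "'a::field \<Rightarrow> 'a poly" where
  "minpoly3 a = (THE p. over_gf3 p \<and> lead_coeff p = 1 \<and> poly p a = 0 \<and>
      (\<forall>q. q \<noteq> 0 \<and> over_gf3 q \<and> poly q a = 0 \<longrightarrow> degree p \<le> degree q))"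

definition cyclic_code :: "'a::field poly \<Rightarrow> nat \<Rightarrow> 'a poly set" where
  "cyclic_code g n = {c. over_gf3 c \<and> degree c < n \<and> g dvd c}"

definition hamming_weight :: "'a::zero poly \<Rightarrow> nat" where
  "hamming_weight c = card {i. coeff c i \<noteq> 0}"

definition min_distance :: "'a::zero poly set \<Rightarrow> nat" where
  "min_distance C = Min (hamming_weight ` (C - {0}))"

definition ternary_code_params :: "'a::zero poly set \<Rightarrow> nat \<Rightarrow> nat \<Rightarrow> bool" where
  "ternary_code_params C k d \<longleftrightarrow> card C = 3 ^ k \<and> min_distance C = d"

end

theory Submission
  imports Defs "HOL-Number_Theory.Residues"
begin

text \<open>
  The code consists of the GF(3)-polynomials of degree below n = 3^m - 1 vanishing at \<alpha> and
  \<alpha>^e; as the minimal polynomials of \<alpha> and \<alpha>^e are distinct of degree m, its dimension is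
  n - 2m. No nonzero codeword has weight at most 2, while comparing the 4 (n choose 2) binomials
  \<plusminus>x^i \<plusminus> x^j with the (n + 1)^2 possible syndromes yields a nonzero codeword of weight at
  most 4. Hence d = 4 iff there is no codeword of weight 3.

  Normalising a relation c1 x1 + c2 x2 + c3 x3 = 0 = c1 x1^e + c2 x2^e + c3 x3^e (with signs c_i)
  to x3 = -1 and using y^e y = y^(3^h), one finds that weight-3 codewords exist iff some
  y \<notin> GF(3) satisfies y^(3^h) = y or y^(3^h) = -y^2. The first happens iff
  GF(3^gcd(h,m)) \<noteq> GF(3); the second, rewritten as (-y)^(3^h - 2) = 1, iff
  gcd(3^h - 2, 3^m - 1) \<noteq> 1.
\<close>

hide_const (open) up_ring.coeff up_ring.monom module.smult

lemma fixed_power_power_mult: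
  fixes x :: "'a::monoid_mult"
  assumes "x ^ (p ^ b) = x"
  shows "x ^ (p ^ (b * q)) = x"
proof (induction q)
  case (Suc q)
  have "p ^ (b * Suc q) = p ^ (b * q) * p ^ b" by (simp add: power_add)
  hence "x ^ (p ^ (b * Suc q)) = (x ^ (p ^ (b * q))) ^ (p ^ b)" by (simp add: power_mult)
  thus ?case using Suc assms by simp
qed simp

lemma fixed_power_power_gcd:
  fixes x :: "'a::monoid_mult"
  shows "x ^ (p ^ a) = x \<Longrightarrow> x ^ (p ^ b) = x \<Longrightarrow> x ^ (p ^ gcd a b) = x"
proof (induction a b rule: gcd_nat_induct)
  case (step a b)
  have "p ^ a = p ^ (b * (a div b)) * p ^ (a mod b)" by (simp flip: power_add)
  hence "x ^ (p ^ a) = (x ^ (p ^ (b * (a div b)))) ^ (p ^ (a mod b))" by (simp add: power_mult)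
  hence "x ^ (p ^ (a mod b)) = x" using fixed_power_power_mult[OF step.prems(2)] step.prems(1) by simp
  thus ?case using step gcd_non_0_nat[of b a] by simp
qed simp

lemma power_gcd_eq_1:
  fixes x :: "'a::monoid_mult"
  shows "x ^ a = 1 \<Longrightarrow> x ^ b = 1 \<Longrightarrow> x ^ gcd a b = 1"
proof (induction a b rule: gcd_nat_induct)
  case (step a b)
  have "x ^ a = (x ^ b) ^ (a div b) * x ^ (a mod b)"
    by (metis div_mult_mod_eq mult.commute power_add power_mult)
  hence "x ^ (a mod b) = 1" using step.prems by simp
  thus ?case using step gcd_non_0_nat[of b a] by simp
qed simp

lemma power_minus_1_dvd_power_minus_1:
  fixes b :: nat
  assumes "1 \<le> b" "g dvd m"
  shows "b ^ g - 1 dvd b ^ m - 1"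
proof -
  obtain l where "m = g * l" using assms(2) by blast
  hence "int b ^ m - 1 = (int b ^ g - 1) * (\<Sum>i<l. (int b ^ g) ^ i)"
    by (simp add: power_mult power_diff_1_eq)
  hence "int b ^ g - 1 dvd int b ^ m - 1" by simp
  thus ?thesis using assms(1) by (simp add: of_nat_diff flip: of_nat_power int_dvd_int_iff)
qed

lemma coprime_power_power_minus_1:
  fixes b :: nat
  assumes "0 < b" "M \<noteq> 0"
  shows "coprime (b ^ j) (b ^ M - 1)"
proof -
  have "coprime (b ^ M - 1) (b ^ M)" by (rule coprime_diff_one_left_nat) (use assms(1) in simp)
  moreover have "b ^ M = b * b ^ (M - 1)" using assms(2) by (metis power_eq_if)
  ultimately have "coprime (b ^ M - 1) b" by (metis coprime_mult_right_iff)
  thus ?thesis by (simp add: coprime_commute)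
qed

text \<open>With t = k - j, this shows that e, 3 e, ..., 3^(M-1) e are distinct modulo 3^M - 1
  for e = 3^h - 1, so the conjugates of \<alpha>^e are distinct.\<close>

lemma not_dvd_3_power_minus_1_mult:
  assumes "1 \<le> h" "h < M" "1 \<le> t" "t < M"
  shows "\<not> (3 ^ M - 1 :: nat) dvd (3 ^ h - 1) * (3 ^ t - 1)"
proof
  define A B n :: int where "A = 3 ^ h" and "B = 3 ^ t" and "n = 3 ^ M - 1"
  assume "(3 ^ M - 1 :: nat) dvd (3 ^ h - 1) * (3 ^ t - 1)"
  hence dvd: "n dvd (A - 1) * (B - 1)"
    unfolding A_def B_def n_def by (metis (mono_tags, lifting) of_nat_1 of_nat_diff of_nat_dvd_iff
        of_nat_mult of_nat_numeral of_nat_power one_le_power one_le_numeral)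
  have "(3::int) ^ Suc h \<le> 3 ^ M" "(3::int) ^ Suc t \<le> 3 ^ M"
    "(3::int) ^ 1 \<le> 3 ^ h" "(3::int) ^ 1 \<le> 3 ^ t"
    using assms power_increasing[of "Suc h" M "3::int"] power_increasing[of "Suc t" M "3::int"]
      power_increasing[of 1 h "3::int"] power_increasing[of 1 t "3::int"] by simp_all
  hence bounds: "3 * A \<le> n + 1" "3 * B \<le> n + 1" "3 \<le> A" "3 \<le> B"
    unfolding A_def B_def n_def by simp_all
  have product: "(A - 1) * (B - 1) = A * B - A - B + 1" by (simp add: algebra_simps)
  show False
  proof (cases "h + t < M")
    case True
    have "(3::int) ^ Suc (h + t) \<le> 3 ^ M"
      using True power_increasing[of "Suc (h + t)" M "3::int"] by simp
    hence "3 * (A * B) \<le> n + 1" unfolding A_def B_def n_def by (simp add: power_add)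
    hence "(A - 1) * (B - 1) < n" using bounds unfolding product by linarith
    moreover have "0 < (A - 1) * (B - 1)" using bounds by (intro mult_pos_pos) linarith+
    ultimately show False using dvd zdvd_not_zless by blast
  next
    case False
    define s where "s = h + t - M"
    have "(3::int) ^ s < A" unfolding A_def s_def using assms False by simp
    have "A * B = 3 ^ s * (n + 1)"
      unfolding A_def B_def n_def s_def using False by (simp flip: power_add)
    hence "n * 3 ^ s - (A - 1) * (B - 1) = A + B - 3 ^ s - 1"
      unfolding product by (simp add: algebra_simps)
    moreover have "n dvd n * 3 ^ s - (A - 1) * (B - 1)" using dvd by (simp add: dvd_diff)
    moreover have "(0::int) < 3 ^ s" by simp
    hence "0 < A + B - 3 ^ s - 1" "A + B - 3 ^ s - 1 < n"
      using bounds \<open>3 ^ s < A\<close> by linarith+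
    ultimately show False using zdvd_not_zless by metis
  qed
qed

lemma card_pairs_less: "2 * card {(i, j). i < j \<and> j < (n::nat)} = n * (n - 1)"
proof (induction n)
  case (Suc n)
  have eq: "{(i, j). i < j \<and> j < Suc n} = {(i, j). i < j \<and> j < n} \<union> (\<lambda>i. (i, n)) ` {..<n}"
    by auto
  have fin: "finite {(i, j). i < j \<and> j < (n::nat)}"
    by (rule finite_subset[of _ "{..<n} \<times> {..<n}"]) auto
  have "card ((\<lambda>i. (i, n)) ` {..<n}) = n" by (simp add: card_image inj_on_def)
  hence "card {(i, j). i < j \<and> j < Suc n} = card {(i, j). i < j \<and> j < n} + n"
    unfolding eq by (subst card_Un_disjoint[OF fin]) auto
  thus ?case using Suc.IH by (cases n) (auto simp: algebra_simps)
qed simp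

lemma square_Suc_less_twice_mult_pred:
  assumes "(8::nat) \<le> n"
  shows "(n + 1) * (n + 1) < 2 * (n * (n - 1))"
proof -
  have "n * (n - 1) = n * n - n" "(n + 1) * (n + 1) = n * n + 2 * n + 1"
    by (simp_all add: diff_mult_distrib2 algebra_simps)
  moreover have "8 * n \<le> n * n" "n \<le> n * n" using assms by simp_all
  ultimately show ?thesis using assms by linarith
qed

lemma monom_add_monom_eqD:
  fixes a b c e :: "'a::comm_ring_1"
  assumes "i < j" "k < l" "a \<noteq> 0" "b \<noteq> 0" "c \<noteq> 0" "e \<noteq> 0"
    and eq: "monom a i + monom b j = monom c k + monom e l"
  shows "i = k \<and> j = l \<and> a = c \<and> b = e"
proof -
  have co: "(if i = x then a else 0) + (if j = x then b else 0) =
      (if k = x then c else 0) + (if l = x then e else 0)" for x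
    using arg_cong[OF eq, of "\<lambda>p. coeff p x"] by (simp add: coeff_monom)
  have "i = k \<or> i = l" "k = i \<or> k = j" "j = k \<or> j = l"
    using co[of i] co[of k] co[of j] assms(1-6) by (auto split: if_splits)
  hence "i = k" "j = l" using assms(1,2) by auto
  thus ?thesis using co[of i] co[of j] assms(1) by simp
qed

lemma poly_eq_sum_support: "poly (p :: 'a::comm_semiring_1 poly) x = (\<Sum>i\<in>{i. coeff p i \<noteq> 0}. coeff p i * x ^ i)"
proof -
  have "poly p x = (\<Sum>i\<le>degree p. coeff p i * x ^ i)" by (rule poly_altdef)
  also have "\<dots> = (\<Sum>i\<in>{i. coeff p i \<noteq> 0}. coeff p i * x ^ i)"
    by (rule sum.mono_neutral_right) (auto intro: le_degree)
  finally show ?thesis .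
qed

lemma finite_support_coeff: "finite {i. coeff p i \<noteq> 0}"
  by (rule finite_subset[of _ "{..degree p}"]) (auto intro: le_degree)

lemma hamming_weight_diff_le:
  "hamming_weight (p - q :: 'a::ab_group_add poly) \<le> hamming_weight p + hamming_weight q"
proof -
  have "{i. coeff (p - q) i \<noteq> 0} \<subseteq> {i. coeff p i \<noteq> 0} \<union> {i. coeff q i \<noteq> 0}" by auto
  hence "hamming_weight (p - q) \<le> card ({i. coeff p i \<noteq> 0} \<union> {i. coeff q i \<noteq> 0})"
    unfolding hamming_weight_def by (intro card_mono) (auto simp: finite_support_coeff)
  also have "\<dots> \<le> hamming_weight p + hamming_weight q"
    unfolding hamming_weight_def by (rule card_Un_le)
  finally show ?thesis .
qed

lemma hamming_weight_monom_add_monom: "hamming_weight (monom a i + monom b j) \<le> 2"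
proof -
  have "hamming_weight (monom a i + monom b j) \<le> card {i, j}"
    unfolding hamming_weight_def by (intro card_mono) (auto simp: coeff_monom split: if_splits)
  also have "\<dots> \<le> 2" by (simp add: card_insert_if)
  finally show ?thesis .
qed

lemma hamming_weight_trinomial:
  assumes "distinct [i, j, k]" "a \<noteq> 0" "b \<noteq> 0" "c \<noteq> 0"
  shows "hamming_weight (monom a i + monom b j + monom c k) = 3"
proof -
  have "{l. coeff (monom a i + monom b j + monom c k) l \<noteq> 0} = {i, j, k}"
    using assms by (auto simp: coeff_monom split: if_splits)
  thus ?thesis unfolding hamming_weight_def using assms(1) by simp
qed

section \<open>Fields of characteristic 3\<close>

lemma CHAR_eq_3_if_card:
  assumes "card (UNIV :: 'a::{field,finite} set) = 3 ^ m" "m \<ge> 1"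
  shows "CHAR('a) = 3"
proof -
  have p: "prime CHAR('a)"
    using prime_CHAR_semidom[where 'a='a] finite_imp_CHAR_pos[where 'a='a] by auto
  have "CHAR('a) dvd 3 ^ m" using CHAR_dvd_CARD[where 'a='a] assms by simp
  hence "CHAR('a) dvd 3" using p prime_dvd_power by blast
  thus ?thesis using p primes_dvd_imp_eq[of "CHAR('a)" 3] by simp
qed

context
  assumes CHAR_3: "CHAR('a::{field,finite}) = 3"
begin

lemma three_eq_0: "(3::'a) = 0"
  using of_nat_CHAR[where 'a='a] CHAR_3 by simp

lemma two_eq_minus_1: "(2::'a) = -1"
proof -
  have "(2::'a) + 1 = 3" by simp
  thus ?thesis using three_eq_0 by (simp add: eq_neg_iff_add_eq_0)
qed

lemma one_neq_minus_1: "(1::'a) \<noteq> -1"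
proof
  assume "(1::'a) = -1"
  hence "(2::'a) = 0" by (metis add_eq_0_iff one_add_one)
  hence "of_nat 2 = (0::'a)" by simp
  hence "CHAR('a) dvd 2" using of_nat_eq_0_iff_char_dvd by blast
  thus False using CHAR_3 by simp
qed

lemma frobenius_add: "((x::'a) + y) ^ (3 ^ k) = x ^ (3 ^ k) + y ^ (3 ^ k)"
  using freshmans_dream'[where 'a='a, of "3 ^ k" k] CHAR_3 by simp

lemma frobenius_sum: "(sum (f :: 'b \<Rightarrow> 'a) A) ^ (3 ^ k) = (\<Sum>i\<in>A. f i ^ (3 ^ k))"
  using freshmans_dream_sum'[where 'a='a, of "3 ^ k" k] CHAR_3 by simp

lemma frobenius_minus: "(-(x::'a)) ^ (3 ^ k) = -(x ^ (3 ^ k))"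
  by (simp add: power_minus_odd)

lemma frobenius_diff: "((x::'a) - y) ^ (3 ^ k) = x ^ (3 ^ k) - y ^ (3 ^ k)"
  using frobenius_add[of x "-y" k] frobenius_minus[of y k] by simp

lemma prime_subfield_char_3: "prime_subfield = {0, 1, -1::'a}"
proof (intro equalityI subsetI)
  fix x :: 'a assume "x \<in> prime_subfield"
  then obtain k where k: "x = of_nat k" unfolding prime_subfield_def by auto
  have "k = 3 * (k div 3) + k mod 3" by simp
  hence "x = of_nat (k mod 3)"
    unfolding k by (metis of_nat_add of_nat_mult of_nat_numeral three_eq_0 mult_zero_left add_0)
  moreover have "k mod 3 \<in> {0, 1, 2}" by auto
  ultimately show "x \<in> {0, 1, -1}" using two_eq_minus_1 by auto
next
  fix x :: 'a assume "x \<in> {0, 1, -1}"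
  moreover have "of_nat 0 = (0::'a)" "of_nat 1 = (1::'a)" "of_nat 2 = (-1::'a)"
    using two_eq_minus_1 by simp_all
  ultimately show "x \<in> prime_subfield" unfolding prime_subfield_def by (metis rangeI insert_iff empty_iff)
qed

lemma prime_subfield_add: "x \<in> prime_subfield \<Longrightarrow> y \<in> prime_subfield \<Longrightarrow> (x::'a) + y \<in> prime_subfield"
  unfolding prime_subfield_char_3 using two_eq_minus_1 by (auto simp: algebra_simps)

lemma prime_subfield_uminus: "x \<in> prime_subfield \<Longrightarrow> -(x::'a) \<in> prime_subfield"
  unfolding prime_subfield_char_3 by auto

lemma prime_subfield_diff: "x \<in> prime_subfield \<Longrightarrow> y \<in> prime_subfield \<Longrightarrow> (x::'a) - y \<in> prime_subfield"
  using prime_subfield_add[of x "-y"] prime_subfield_uminus[of y] by simp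

lemma prime_subfield_mult: "x \<in> prime_subfield \<Longrightarrow> y \<in> prime_subfield \<Longrightarrow> (x::'a) * y \<in> prime_subfield"
  unfolding prime_subfield_char_3 by auto

lemma prime_subfield_inverse: "x \<in> prime_subfield \<Longrightarrow> inverse (x::'a) \<in> prime_subfield"
  unfolding prime_subfield_char_3 by auto

lemma prime_subfield_sum:
  "(\<And>i. i \<in> A \<Longrightarrow> f i \<in> prime_subfield) \<Longrightarrow> sum (f :: 'b \<Rightarrow> 'a) A \<in> prime_subfield"
proof (induction A rule: infinite_finite_induct)
  case (insert i A)
  thus ?case by (simp add: prime_subfield_add)
qed (simp_all add: prime_subfield_char_3)

lemma frobenius_prime_subfield: "(x::'a) \<in> prime_subfield \<Longrightarrow> x ^ (3 ^ k) = x"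
  unfolding prime_subfield_char_3 by (auto simp: power_minus_odd)

lemma prime_subfield_if_cube_eq: "(x::'a) ^ 3 = x \<Longrightarrow> x \<in> prime_subfield"
proof -
  assume "x ^ 3 = x"
  hence "x * (x - 1) * (x + 1) = 0" by (simp add: algebra_simps power3_eq_cube)
  thus ?thesis unfolding prime_subfield_char_3 by (auto simp: eq_neg_iff_add_eq_0)
qed

lemma card_prime_subfield: "card (prime_subfield :: 'a set) = 3"
  unfolding prime_subfield_char_3 using one_neq_minus_1 by simp

lemma over_gf3_0 [simp]: "over_gf3 (0::'a poly)"
  by (simp add: over_gf3_def prime_subfield_char_3)

lemma over_gf3_monom: "c \<in> prime_subfield \<Longrightarrow> over_gf3 (monom (c::'a) k)"
  by (simp add: over_gf3_def coeff_monom prime_subfield_char_3)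

lemma over_gf3_add: "over_gf3 (p::'a poly) \<Longrightarrow> over_gf3 q \<Longrightarrow> over_gf3 (p + q)"
  by (simp add: over_gf3_def prime_subfield_add)

lemma over_gf3_diff: "over_gf3 (p::'a poly) \<Longrightarrow> over_gf3 q \<Longrightarrow> over_gf3 (p - q)"
  by (simp add: over_gf3_def prime_subfield_diff)

lemma over_gf3_smult: "c \<in> prime_subfield \<Longrightarrow> over_gf3 (p::'a poly) \<Longrightarrow> over_gf3 (smult c p)"
  by (simp add: over_gf3_def prime_subfield_mult)

lemma over_gf3_mult: "over_gf3 (p::'a poly) \<Longrightarrow> over_gf3 q \<Longrightarrow> over_gf3 (p * q)"
  by (simp add: over_gf3_def coeff_mult prime_subfield_mult prime_subfield_sum)

lemma poly_frobenius: "over_gf3 (p::'a poly) \<Longrightarrow> poly p (x ^ (3 ^ k)) = poly p x ^ (3 ^ k)"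
  unfolding poly_altdef frobenius_sum over_gf3_def
  by (simp add: power_mult_distrib frobenius_prime_subfield flip: power_mult) (simp add: mult.commute)

definition gf3_polys_below :: "nat \<Rightarrow> 'a poly set" where
  "gf3_polys_below k = {p. over_gf3 p \<and> (\<forall>i\<ge>k. coeff p i = 0)}"

lemma gf3_polys_below_0: "gf3_polys_below 0 = {0}"
  unfolding gf3_polys_below_def by (auto simp: poly_eq_iff)

lemma gf3_polys_below_Suc:
  "gf3_polys_below (Suc k) = (\<lambda>(c, p). p + monom c k) ` (prime_subfield \<times> gf3_polys_below k)"
proof (intro equalityI subsetI)
  fix p assume p: "p \<in> gf3_polys_below (Suc k)"
  let ?q = "p - monom (coeff p k) k"
  have "coeff p k \<in> prime_subfield" using p unfolding gf3_polys_below_def over_gf3_def by auto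
  moreover have "?q \<in> gf3_polys_below k"
    using p calculation unfolding gf3_polys_below_def
    by (auto simp: coeff_monom intro!: over_gf3_diff over_gf3_monom)
  ultimately show "p \<in> (\<lambda>(c, p). p + monom c k) ` (prime_subfield \<times> gf3_polys_below k)"
    by (intro image_eqI[of _ _ "(coeff p k, ?q)"]) auto
next
  fix p assume "p \<in> (\<lambda>(c, p). p + monom c k) ` (prime_subfield \<times> gf3_polys_below k)"
  then obtain c q where "p = q + monom c k" "c \<in> prime_subfield" "q \<in> gf3_polys_below k"
    by auto
  thus "p \<in> gf3_polys_below (Suc k)" unfolding gf3_polys_below_def
    by (auto intro!: over_gf3_add over_gf3_monom simp: coeff_monom)
qed

lemma card_gf3_polys_below: "card (gf3_polys_below k) = 3 ^ k"
proof (induction k)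
  case 0 show ?case by (simp add: gf3_polys_below_0)
next
  case (Suc k)
  have inj: "inj_on (\<lambda>(c, p). p + monom c k) (prime_subfield \<times> gf3_polys_below k)"
  proof (rule inj_onI, clarify)
    fix c p c' p'
    assume eq: "p + monom c k = p' + monom c' k"
      and "p \<in> gf3_polys_below k" "p' \<in> gf3_polys_below k"
    have "coeff (p + monom c k) k = coeff (p' + monom c' k) k" using eq by simp
    hence "c = c'" using \<open>p \<in> _\<close> \<open>p' \<in> _\<close> unfolding gf3_polys_below_def by simp
    thus "c = c' \<and> p = p'" using eq by simp
  qed
  have "finite (gf3_polys_below k)" using Suc.IH card_ge_0_finite by force
  then show ?case unfolding gf3_polys_below_Suc
    by (simp add: card_image[OF inj] card_cartesian_product card_prime_subfield Suc.IH)
qed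

lemma finite_gf3_polys_below: "finite (gf3_polys_below k)"
  using card_gf3_polys_below[of k] card_ge_0_finite by force

lemma degree_less_if_coeff_eq_0:
  "degree (p::'b::zero poly) \<le> d \<Longrightarrow> coeff p d = 0 \<Longrightarrow> p = 0 \<or> degree p < d"
  by (metis le_neq_implies_less leading_coeff_0_iff)

lemma over_gf3_division:
  assumes g: "over_gf3 (g::'a poly)" "lead_coeff g = 1" and "over_gf3 c"
  shows "\<exists>f r. over_gf3 f \<and> over_gf3 r \<and> c = g * f + r \<and> (r = 0 \<or> degree r < degree g)"
  using assms(3)
proof (induction "degree c" arbitrary: c rule: less_induct)
  case less
  show ?case
  proof (cases "c = 0 \<or> degree c < degree g")
    case True
    then show ?thesis using less.prems by (intro exI[of _ 0] exI[of _ c]) auto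
  next
    case False
    hence c0: "c \<noteq> 0" and dg: "degree g \<le> degree c" by auto
    let ?t = "monom (lead_coeff c) (degree c - degree g)"
    let ?c' = "c - g * ?t"
    have t: "over_gf3 ?t"
      using less.prems by (intro over_gf3_monom) (simp add: over_gf3_def)
    have c': "over_gf3 ?c'" by (intro over_gf3_diff over_gf3_mult less.prems g t)
    have "g \<noteq> 0" "?t \<noteq> 0" using g c0 by auto
    hence deg_gt: "degree (g * ?t) = degree c"
      using dg by (simp add: degree_mult_eq degree_monom_eq c0)
    have lead_gt: "lead_coeff (g * ?t) = lead_coeff c"
      using g by (simp add: lead_coeff_mult degree_monom_eq c0)
    have "degree ?c' \<le> degree c" using deg_gt by (metis degree_diff_le le_refl)
    moreover have "coeff ?c' (degree c) = 0" using lead_gt deg_gt by simp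
    ultimately have "?c' = 0 \<or> degree ?c' < degree c" by (rule degree_less_if_coeff_eq_0)
    thus ?thesis
    proof
      assume "?c' = 0"
      thus ?thesis using t by (intro exI[of _ ?t] exI[of _ 0]) auto
    next
      assume "degree ?c' < degree c"
      from less.hyps[OF this c'] obtain f r where fr: "over_gf3 f" "over_gf3 r"
        "?c' = g * f + r" "r = 0 \<or> degree r < degree g" by blast
      have "c = g * (f + ?t) + r" using fr(3) by (simp add: algebra_simps)
      moreover have "over_gf3 (f + ?t)" by (intro over_gf3_add fr t)
      ultimately show ?thesis using fr by blast
    qed
  qed
qed

lemma over_gf3_quotient:
  assumes g: "over_gf3 (g::'a poly)" "lead_coeff g = 1" and c: "over_gf3 c" and "g dvd c"
  shows "\<exists>f. over_gf3 f \<and> c = g * f"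
proof -
  obtain f r where fr: "over_gf3 f" "c = g * f + r" "r = 0 \<or> degree r < degree g"
    using over_gf3_division[OF g c] by blast
  have "g dvd r" using \<open>g dvd c\<close> fr(2) by (metis dvd_add_right_iff dvd_triv_left)
  hence "r = 0" using fr(3) dvd_imp_degree_le by (metis leD)
  thus ?thesis using fr by auto
qed

definition signed_binomials :: "nat \<Rightarrow> 'a poly set" where
  "signed_binomials n = (\<lambda>((i, j), (a, b)). monom a i + monom b j) `
     ({(i, j). i < j \<and> j < n} \<times> ({1, -1} \<times> {1, -1}))"

lemma card_signed_binomials: "card (signed_binomials n) = 2 * (n * (n - 1))"
proof -
  let ?I = "{(i, j). i < j \<and> j < n} \<times> ({1, -1::'a} \<times> {1, -1})"
  have "inj_on (\<lambda>((i, j), (a, b)). monom a i + monom b j) ?I"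
  proof (rule inj_onI)
    fix x y
    assume "x \<in> ?I" "y \<in> ?I" "(\<lambda>((i, j), (a, b)). monom a i + monom b j) x =
      (\<lambda>((i, j), (a, b)). monom a i + monom b j) y"
    moreover obtain i j a b i' j' a' b' where "x = ((i, j), (a, b))" "y = ((i', j'), (a', b'))"
      by (metis prod.collapse)
    ultimately show "x = y" using monom_add_monom_eqD[of i j i' j' a b a' b'] by auto
  qed
  moreover have "finite {(i, j). i < j \<and> j < n}"
    by (rule finite_subset[of _ "{..<n} \<times> {..<n}"]) auto
  ultimately show ?thesis
    using card_pairs_less[of n] one_neq_minus_1
    unfolding signed_binomials_def by (simp add: card_image card_cartesian_product)
qed

lemma signed_binomialsD:
  assumes "p \<in> signed_binomials n"
  shows "over_gf3 p" "degree p < n" "hamming_weight p \<le> 2"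
proof -
  obtain i j a b where p: "p = monom a i + monom b j" "i < j" "j < n" "a \<in> {1, -1}" "b \<in> {1, -1}"
    using assms unfolding signed_binomials_def by auto
  show "over_gf3 p" unfolding p(1)
    using p(4,5) by (intro over_gf3_add over_gf3_monom) (auto simp: prime_subfield_char_3)
  have "degree p \<le> max i j" unfolding p(1)
    by (metis degree_add_le degree_monom_le le_trans max.cobounded1 max.cobounded2)
  thus "degree p < n" using p(2,3) by simp
  show "hamming_weight p \<le> 2" unfolding p(1) by (rule hamming_weight_monom_add_monom)
qed

section \<open>Minimal polynomials over GF(3)\<close>

definition is_minpoly3 :: "'a \<Rightarrow> 'a poly \<Rightarrow> bool" where
  "is_minpoly3 a p \<longleftrightarrow> over_gf3 p \<and> lead_coeff p = 1 \<and> poly p a = 0 \<and>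
      (\<forall>q. q \<noteq> 0 \<and> over_gf3 q \<and> poly q a = 0 \<longrightarrow> degree p \<le> degree q)"

lemma is_minpoly3_unique:
  assumes p1: "is_minpoly3 a p1" and p2: "is_minpoly3 a p2"
  shows "p1 = p2"
proof (rule ccontr)
  assume "p1 \<noteq> p2"
  have "p1 \<noteq> 0" "p2 \<noteq> 0" using assms unfolding is_minpoly3_def by auto
  hence deg: "degree p1 = degree p2" using assms unfolding is_minpoly3_def by (meson antisym)
  have "over_gf3 (p1 - p2)" "poly (p1 - p2) a = 0"
    using assms unfolding is_minpoly3_def by (auto intro: over_gf3_diff)
  hence "degree p1 \<le> degree (p1 - p2)" using p1 \<open>p1 \<noteq> p2\<close> unfolding is_minpoly3_def by simp
  moreover have "degree (p1 - p2) \<le> degree p1" using deg by (metis degree_diff_le le_refl)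
  moreover have "coeff (p1 - p2) (degree p1) = 0" using assms deg unfolding is_minpoly3_def by simp
  ultimately show False using degree_less_if_coeff_eq_0[of "p1 - p2"] \<open>p1 \<noteq> p2\<close> by auto
qed

context
  fixes M :: nat
  assumes card_UNIV: "card (UNIV :: 'a set) = 3 ^ M"
begin

text \<open>Pigeonhole: the 3^(M+1) polynomials of degree at most M cannot take distinct values at a.\<close>

lemma ex_over_gf3_root_degree_le:
  "\<exists>q. q \<noteq> 0 \<and> over_gf3 q \<and> poly q (a::'a) = 0 \<and> degree q \<le> M"
proof -
  have "\<not> inj_on (\<lambda>p. poly p a) (gf3_polys_below (Suc M))"
  proof
    assume "inj_on (\<lambda>p. poly p a) (gf3_polys_below (Suc M))"
    hence "card (gf3_polys_below (Suc M)) \<le> card (UNIV :: 'a set)"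
      by (intro card_inj_on_le) auto
    thus False using card_UNIV card_gf3_polys_below[of "Suc M"] by simp
  qed
  then obtain p1 p2 where p: "p1 \<in> gf3_polys_below (Suc M)" "p2 \<in> gf3_polys_below (Suc M)"
    "p1 \<noteq> p2" "poly p1 a = poly p2 a" unfolding inj_on_def by blast
  have "degree (p1 - p2) \<le> M"
    using p(1,2) unfolding gf3_polys_below_def by (intro degree_le) auto
  moreover have "over_gf3 (p1 - p2)"
    using p unfolding gf3_polys_below_def by (auto intro: over_gf3_diff)
  ultimately show ?thesis using p by (intro exI[of _ "p1 - p2"]) auto
qed

lemma is_minpoly3_minpoly3: "is_minpoly3 (a::'a) (minpoly3 a) \<and> degree (minpoly3 a) \<le> M"
proof -
  let ?S = "\<lambda>q. q \<noteq> 0 \<and> over_gf3 q \<and> poly q a = 0"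
  obtain q where q: "?S q" "degree q \<le> M" using ex_over_gf3_root_degree_le by blast
  obtain p0 where p0: "?S p0" "\<forall>y. ?S y \<longrightarrow> degree p0 \<le> degree y"
    using ex_has_least_nat[of ?S q degree] q by blast
  let ?p = "smult (inverse (lead_coeff p0)) p0"
  have l0: "lead_coeff p0 \<noteq> 0" using p0 by simp
  have p: "is_minpoly3 a ?p" unfolding is_minpoly3_def
  proof (intro conjI allI impI)
    show "over_gf3 ?p"
      using p0 l0 by (intro over_gf3_smult prime_subfield_inverse) (auto simp: over_gf3_def)
  qed (use p0 l0 in \<open>auto simp: lead_coeff_smult\<close>)
  have "minpoly3 a = ?p" unfolding minpoly3_def
    by (rule the_equality) (use p is_minpoly3_unique[OF _ p] in \<open>auto simp: is_minpoly3_def\<close>)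
  moreover have "degree ?p \<le> M" using p0 q l0 by force
  ultimately show ?thesis using p by simp
qed

lemma over_gf3_minpoly3: "over_gf3 (minpoly3 (a::'a))"
  and lead_coeff_minpoly3: "lead_coeff (minpoly3 (a::'a)) = 1"
  and poly_minpoly3: "poly (minpoly3 (a::'a)) a = 0"
  and degree_minpoly3_le: "degree (minpoly3 (a::'a)) \<le> M"
  and degree_minpoly3_minimal:
    "q \<noteq> 0 \<Longrightarrow> over_gf3 q \<Longrightarrow> poly q a = 0 \<Longrightarrow> degree (minpoly3 a) \<le> degree q"
  using is_minpoly3_minpoly3[of a] unfolding is_minpoly3_def by blast+

lemma minpoly3_nonzero: "minpoly3 (a::'a) \<noteq> 0"
  using lead_coeff_minpoly3[of a] by auto

lemma minpoly3_dvd: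
  assumes "over_gf3 c" "poly c (a::'a) = 0"
  shows "minpoly3 a dvd c"
proof -
  obtain f r where fr: "over_gf3 r" "c = minpoly3 a * f + r"
      "r = 0 \<or> degree r < degree (minpoly3 a)"
    using over_gf3_division[OF over_gf3_minpoly3 lead_coeff_minpoly3 assms(1)] by blast
  have "poly r a = 0" using fr(2) assms(2) poly_minpoly3[of a] by simp
  hence "r = 0" using fr degree_minpoly3_minimal[of r a] by (meson leD)
  thus ?thesis using fr by simp
qed

lemma poly_minpoly3_frobenius: "poly (minpoly3 (a::'a)) (a ^ (3 ^ k)) = 0"
  using poly_frobenius[OF over_gf3_minpoly3, of a a k] poly_minpoly3[of a] by simp

lemma card_le_degree_minpoly3:
  assumes "\<And>x. x \<in> A \<Longrightarrow> poly (minpoly3 (a::'a)) x = 0"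
  shows "card A \<le> degree (minpoly3 a)"
proof -
  have "card A \<le> card {x. poly (minpoly3 a) x = 0}"
    using assms by (intro card_mono poly_roots_finite minpoly3_nonzero) auto
  also have "\<dots> \<le> degree (minpoly3 a)" by (rule card_poly_roots_bound[OF minpoly3_nonzero])
  finally show ?thesis .
qed

lemma degree_minpoly3_eq_if_inj_on:
  assumes "inj_on (\<lambda>k. (a::'a) ^ (3 ^ k)) {..<M}"
  shows "degree (minpoly3 a) = M"
proof (rule antisym)
  show "degree (minpoly3 a) \<le> M" by (rule degree_minpoly3_le)
  have "card ((\<lambda>k. a ^ (3 ^ k)) ` {..<M}) \<le> degree (minpoly3 a)"
    by (rule card_le_degree_minpoly3) (auto intro: poly_minpoly3_frobenius)
  thus "M \<le> degree (minpoly3 a)" using assms by (simp add: card_image)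
qed

lemma power_card_minus_1: "(x::'a) \<noteq> 0 \<Longrightarrow> x ^ (3 ^ M - 1) = 1"
proof -
  assume x: "x \<noteq> 0"
  have "(\<Prod>y\<in>UNIV - {0}. x * y) = x ^ card (UNIV - {0::'a}) * \<Prod>(UNIV - {0::'a})"
    by (simp add: prod.distrib)
  moreover have "(\<Prod>y\<in>UNIV - {0}. x * y) = (\<Prod>y\<in>UNIV - {0::'a}. y)"
    by (rule prod.reindex_bij_witness[of _ "\<lambda>y. y / x" "\<lambda>y. x * y"]) (use x in auto)
  moreover have "\<Prod>(UNIV - {0::'a}) \<noteq> 0" by (simp add: prod_zero_iff)
  moreover have "card (UNIV - {0::'a}) = 3 ^ M - 1" by (simp add: card_Diff_singleton card_UNIV)
  ultimately show ?thesis by (metis mult_cancel_right1)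
qed

lemma power_card_eq_self: "(x::'a) ^ (3 ^ M) = x"
proof (cases "x = 0")
  case False
  have "x ^ (3 ^ M) = x * x ^ (3 ^ M - 1)" by (metis power_Suc Suc_pred' zero_less_power zero_less_numeral)
  thus ?thesis using power_card_minus_1[OF False] by simp
qed simp

end

section \<open>Three-term relations in characteristic 3\<close>

context
  fixes h :: nat
  assumes h_pos: "1 \<le> h"
begin

lemma power_3_power_minus_1_mult: "(z::'a) ^ (3 ^ h - 1) * z = z ^ (3 ^ h)"
  by (metis power_Suc2 Suc_pred' zero_less_power zero_less_numeral)

lemma even_3_power_minus_1: "even (3 ^ h - 1 :: nat)"
  using h_pos by simp

lemma sign_power_3_power_minus_1: "(c::'a) \<in> {1, -1} \<Longrightarrow> c ^ (3 ^ h - 1) = 1"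
  using h_pos by (auto simp: power_minus_even)

lemma no_two_term_relation:
  assumes signs: "a \<in> {1, -1}" "b \<in> {1, -1}" and "(x::'a) \<noteq> 0" "x \<noteq> y"
    and rel: "a * x + b * y = 0" and rel_e: "a * x ^ (3 ^ h - 1) + b * y ^ (3 ^ h - 1) = 0"
  shows False
proof -
  have "b * y = - (a * x)" using rel by (simp add: eq_neg_iff_add_eq_0 add.commute)
  hence "(b * y) ^ (3 ^ h - 1) = (a * x) ^ (3 ^ h - 1)"
    using even_3_power_minus_1 by (metis power_minus_even)
  hence "y ^ (3 ^ h - 1) = x ^ (3 ^ h - 1)"
    using sign_power_3_power_minus_1[OF signs(1)] sign_power_3_power_minus_1[OF signs(2)]
    by (simp add: power_mult_distrib)
  hence "(a + b) * x ^ (3 ^ h - 1) = 0" using rel_e by (simp add: algebra_simps)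
  hence "b = -a" using \<open>x \<noteq> 0\<close> by (simp add: eq_neg_iff_add_eq_0 add.commute)
  hence "a * (x - y) = 0" using rel by (simp add: algebra_simps)
  thus False using signs \<open>x \<noteq> y\<close> by auto
qed

text \<open>
  Below, z + u = -1 is a three-term relation divided by its third term. Multiplied by z u,
  the e-th power relation becomes polynomial in z, u and w = z^(3^h), since z^e z = w and
  u^e u = u^(3^h) = -1 - w.
\<close>

lemma normalised_relation_polynomial:
  assumes sum: "(z::'a) + u = -1"
  shows "u ^ (3 ^ h) = -1 - z ^ (3 ^ h)"
    and "e1 * z ^ (3 ^ h - 1) + e2 * u ^ (3 ^ h - 1) + 1 = 0 \<Longrightarrow>
      e1 * z ^ (3 ^ h) * u + e2 * (-1 - z ^ (3 ^ h)) * z + z * u = 0"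
proof -
  have u: "u = -1 - z" using sum by (simp add: algebra_simps)
  show w_u: "u ^ (3 ^ h) = -1 - z ^ (3 ^ h)"
    unfolding u using frobenius_diff[of "-1" z h] frobenius_minus[of 1 h] by simp
  have "(e1 * z ^ (3 ^ h - 1) + e2 * u ^ (3 ^ h - 1) + 1) * (z * u) =
      e1 * (z ^ (3 ^ h - 1) * z) * u + e2 * (u ^ (3 ^ h - 1) * u) * z + z * u"
    by (simp add: algebra_simps)
  thus "e1 * z ^ (3 ^ h - 1) + e2 * u ^ (3 ^ h - 1) + 1 = 0 \<Longrightarrow>
      e1 * z ^ (3 ^ h) * u + e2 * (-1 - z ^ (3 ^ h)) * z + z * u = 0"
    using w_u unfolding power_3_power_minus_1_mult by simp
qed

lemma neg_square_of_relation_minus_minus: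
  assumes "(z::'a) \<noteq> 0" "u \<noteq> 0" "z \<noteq> u" and sum: "z + u = -1"
    and "w = z ^ (3 ^ h)" and w_u: "u ^ (3 ^ h) = -1 - w"
    and relation_e: "(-1 - w) * z ^ 2 = - (u ^ 2) * w"
  shows "\<exists>y::'a. y \<notin> prime_subfield \<and> y ^ (3 ^ h) = - (y ^ 2)"
proof -
  have "w \<noteq> 0" using assms by simp
  have "(u / z) ^ (3 ^ h) = (-1 - w) / w" using assms by (simp add: power_divide)
  also have "\<dots> = (- (u ^ 2)) / z ^ 2"
    by (subst frac_eq_eq) (use relation_e \<open>w \<noteq> 0\<close> assms(1) in auto)
  finally have "(u / z) ^ (3 ^ h) = - ((u / z) ^ 2)" by (simp add: power_divide)
  moreover have "u \<noteq> - z" using sum by auto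
  hence "u / z \<notin> prime_subfield"
    using assms(1-3) by (auto simp: prime_subfield_char_3 divide_eq_eq)
  ultimately show ?thesis by blast
qed

lemma exceptional_of_normalised_relation:
  assumes e1: "e1 \<in> {1, -1::'a}" and e2: "e2 \<in> {1, -1::'a}"
    and z0: "z \<noteq> 0" and u0: "u \<noteq> 0" and sum: "z + u = -1"
    and d1: "z \<noteq> e1" and d2: "u \<noteq> e2" and d3: "e1 * z \<noteq> e2 * u"
    and relation_e: "e1 * z ^ (3 ^ h - 1) + e2 * u ^ (3 ^ h - 1) + 1 = 0"
  shows "(\<exists>y::'a. y \<notin> prime_subfield \<and> y ^ (3 ^ h) = y) \<or>
         (\<exists>y::'a. y \<notin> prime_subfield \<and> y ^ (3 ^ h) = - (y ^ 2))"
proof -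
  define w where "w = z ^ (3 ^ h)"
  have u: "u = -1 - z" using sum by (simp add: algebra_simps)
  note w_u = normalised_relation_polynomial(1)[OF sum, folded w_def]
  note key = normalised_relation_polynomial(2)[OF sum relation_e, folded w_def]
  have z_notin: "z \<notin> prime_subfield" if "e1 = 1" "e2 = 1 \<or> z \<noteq> -1"
    using that z0 d1 u0 u by (auto simp: prime_subfield_char_3)
  consider "e1 = 1" "e2 = 1" | "e1 = 1" "e2 = -1" | "e1 = -1" "e2 = 1" | "e1 = -1" "e2 = -1"
    using e1 e2 by blast
  thus ?thesis
  proof cases
    case 1
    have "(w - z) * (z - 1) = (e1 * w * u + e2 * (-1 - w) * z + z * u) + 3 * (w * z + z)"
      unfolding 1 u by (simp add: algebra_simps)
    hence "(w - z) * (z - 1) = 0" using key three_eq_0 by simp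
    hence "z ^ (3 ^ h) = z" using d1 1 unfolding w_def by simp
    moreover have "z \<notin> prime_subfield" using z_notin 1 by simp
    ultimately show ?thesis by blast
  next
    case 2
    have "- (w + z ^ 2) = e1 * w * u + e2 * (-1 - w) * z + z * u"
      unfolding 2 u by (simp add: algebra_simps power2_eq_square)
    hence "w + z ^ 2 = 0" using key by (metis neg_equal_0_iff_equal)
    hence "w = - (z ^ 2)" by (simp add: eq_neg_iff_add_eq_0)
    moreover have "z \<noteq> -1" using u0 u by auto
    ultimately show ?thesis using z_notin 2 unfolding w_def by blast
  next
    case 3
    have "w - 2 * z - z ^ 2 = 0" using key unfolding 3 u by (simp add: algebra_simps power2_eq_square)
    hence "-1 - w = - (u ^ 2)" unfolding u by (simp add: algebra_simps power2_eq_square)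
    moreover have "u \<notin> prime_subfield"
      using z0 d2 3 u0 u by (auto simp: prime_subfield_char_3)
    ultimately show ?thesis using w_u by auto
  next
    case 4
    have "(-1 - w) * z ^ 2 = - (u ^ 2) * w"
      using key unfolding 4 u by (simp add: algebra_simps power2_eq_square)
    moreover have "z \<noteq> u" using d3 4 by simp
    ultimately show ?thesis
      using neg_square_of_relation_minus_minus[OF z0 u0 _ sum w_def w_u] by blast
  qed
qed

lemma normalised_power_relation:
  assumes "c1 \<in> {1, -1::'a}" "c2 \<in> {1, -1}" "c3 \<in> {1, -1}" "x3 \<noteq> 0" "c3 * c3 = 1"
    and relation_e: "c1 * x1 ^ (3 ^ h - 1) + c2 * x2 ^ (3 ^ h - 1) + c3 * x3 ^ (3 ^ h - 1) = 0"
  shows "c1 * c3 * (c1 * c3 * x1 / x3) ^ (3 ^ h - 1) + c2 * c3 * (c2 * c3 * x2 / x3) ^ (3 ^ h - 1) + 1 = 0"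
proof -
  have signs_e: "c1 ^ (3 ^ h - 1) = 1" "c2 ^ (3 ^ h - 1) = 1" "c3 ^ (3 ^ h - 1) = 1"
    by (rule sign_power_3_power_minus_1, rule assms)+
  have "c1 * x1 ^ (3 ^ h - 1) + c2 * x2 ^ (3 ^ h - 1) = - (c3 * x3 ^ (3 ^ h - 1))"
    using relation_e by (simp add: eq_neg_iff_add_eq_0)
  hence "c3 * (c1 * x1 ^ (3 ^ h - 1) + c2 * x2 ^ (3 ^ h - 1)) = - ((c3 * c3) * x3 ^ (3 ^ h - 1))"
    by (simp add: algebra_simps)
  hence "c3 * (c1 * x1 ^ (3 ^ h - 1) + c2 * x2 ^ (3 ^ h - 1)) + x3 ^ (3 ^ h - 1) = 0"
    using assms(5) by simp
  moreover have "c1 * c3 * (c1 * c3 * x1 / x3) ^ (3 ^ h - 1) + c2 * c3 * (c2 * c3 * x2 / x3) ^ (3 ^ h - 1) + 1 =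
      (c3 * (c1 * x1 ^ (3 ^ h - 1) + c2 * x2 ^ (3 ^ h - 1)) + x3 ^ (3 ^ h - 1)) / x3 ^ (3 ^ h - 1)"
    unfolding power_divide power_mult_distrib signs_e using assms(4) by (simp add: field_simps)
  ultimately show ?thesis by simp
qed

lemma exceptional_of_three_term_relation:
  assumes c: "c1 \<in> {1, -1::'a}" "c2 \<in> {1, -1}" "c3 \<in> {1, -1}"
    and x0: "x1 \<noteq> 0" "x2 \<noteq> 0" "x3 \<noteq> 0" and dist: "x1 \<noteq> x2" "x1 \<noteq> x3" "x2 \<noteq> x3"
    and relation: "c1 * x1 + c2 * x2 + c3 * x3 = 0"
    and relation_e: "c1 * x1 ^ (3 ^ h - 1) + c2 * x2 ^ (3 ^ h - 1) + c3 * x3 ^ (3 ^ h - 1) = 0"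
  shows "(\<exists>y::'a. y \<notin> prime_subfield \<and> y ^ (3 ^ h) = y) \<or>
         (\<exists>y::'a. y \<notin> prime_subfield \<and> y ^ (3 ^ h) = - (y ^ 2))"
proof -
  have c3_sq: "c3 * c3 = 1" and c_nz: "c1 \<noteq> 0" "c2 \<noteq> 0" "c3 \<noteq> 0" using c by auto
  define z where "z = c1 * c3 * x1 / x3"
  define u where "u = c2 * c3 * x2 / x3"
  have e1: "c1 * c3 \<in> {1, -1}" and e2: "c2 * c3 \<in> {1, -1}" using c by auto
  hence e1_sq: "(c1 * c3) * (c1 * c3) = 1" and e2_sq: "(c2 * c3) * (c2 * c3) = 1" by auto
  show ?thesis
  proof (rule exceptional_of_normalised_relation[OF e1 e2])
    show "z \<noteq> 0" "u \<noteq> 0" using c_nz x0 by (simp_all add: z_def u_def)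
    have "c3 * (c1 * x1 + c2 * x2) + (c3 * c3) * x3 = 0"
      using relation by (metis distrib_left mult.assoc mult_zero_right)
    hence "c3 * (c1 * x1 + c2 * x2) = - x3" using c3_sq by (simp add: eq_neg_iff_add_eq_0)
    thus "z + u = -1" unfolding z_def u_def using x0 by (simp add: field_simps)
    show "z \<noteq> c1 * c3"
    proof
      assume "z = c1 * c3"
      hence "c1 * c3 * x1 = c1 * c3 * x3" unfolding z_def using x0 by (simp add: field_simps)
      thus False using c_nz dist by simp
    qed
    show "u \<noteq> c2 * c3"
    proof
      assume "u = c2 * c3"
      hence "c2 * c3 * x2 = c2 * c3 * x3" unfolding u_def using x0 by (simp add: field_simps)
      thus False using c_nz dist by simp
    qed
    show "c1 * c3 * z \<noteq> c2 * c3 * u"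
    proof
      assume "c1 * c3 * z = c2 * c3 * u"
      hence "((c1 * c3) * (c1 * c3)) * x1 / x3 = ((c2 * c3) * (c2 * c3)) * x2 / x3"
        unfolding z_def u_def by (simp add: algebra_simps)
      hence "x1 / x3 = x2 / x3" using e1_sq e2_sq by simp
      thus False using x0 dist by (simp add: field_simps)
    qed
    show "c1 * c3 * z ^ (3 ^ h - 1) + c2 * c3 * u ^ (3 ^ h - 1) + 1 = 0"
      unfolding z_def u_def by (rule normalised_power_relation[OF c x0(3) c3_sq relation_e])
  qed
qed

lemma frobenius_fixed_relation:
  assumes "y ^ (3 ^ h) = y" "(y::'a) \<noteq> 0" "y \<noteq> -1"
  shows "y ^ (3 ^ h - 1) + (-1 - y) ^ (3 ^ h - 1) + 1 = 0"
proof -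
  have "y ^ (3 ^ h - 1) * y = 1 * y" using assms(1) power_3_power_minus_1_mult[of y] by simp
  hence "y ^ (3 ^ h - 1) = 1" using assms(2) by simp
  moreover have "(-1 - y) ^ (3 ^ h) = -1 - y"
    using frobenius_diff[of "-1" y h] frobenius_minus[of 1 h] assms(1) by simp
  hence "(-1 - y) ^ (3 ^ h - 1) * (-1 - y) = 1 * (-1 - y)"
    using power_3_power_minus_1_mult[of "-1 - y"] by simp
  hence "(-1 - y) ^ (3 ^ h - 1) = 1" using assms(3) by (simp add: diff_eq_eq)
  ultimately show ?thesis using three_eq_0 by simp
qed

lemma frobenius_neg_square_relation:
  assumes "y ^ (3 ^ h) = - (y ^ 2)" "(y::'a) \<noteq> 0" "y \<noteq> -1"
  shows "y ^ (3 ^ h - 1) - (1 + y) ^ (3 ^ h - 1) + 1 = 0"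
proof -
  have "y ^ (3 ^ h - 1) * y = (- y) * y"
    using assms(1) power_3_power_minus_1_mult[of y] by (simp add: power2_eq_square)
  hence "y ^ (3 ^ h - 1) = - y" using assms(2) mult_right_cancel by blast
  moreover have "(1 + y) ^ (3 ^ h - 1) * (1 + y) = (1 - y) * (1 + y)"
    using frobenius_add[of 1 y h] assms(1) power_3_power_minus_1_mult[of "1 + y"]
    by (simp add: algebra_simps power2_eq_square)
  hence "(1 + y) ^ (3 ^ h - 1) = 1 - y" using assms(3) by (metis add.commute add_eq_0_iff mult_right_cancel)
  ultimately show ?thesis by simp
qed

end

section \<open>Powers of a primitive element\<close>

context
  fixes M :: nat and \<alpha> :: 'a
  assumes card_UNIV: "card (UNIV :: 'a set) = 3 ^ M"
    and primitive: "is_primitive \<alpha>"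
    and M_pos: "M \<ge> 1"
begin

abbreviation (input) N :: nat where "N \<equiv> 3 ^ M - 1"

lemma N_ge_2: "N \<ge> 2"
proof -
  have "(3::nat) ^ M \<ge> 3 ^ 1" using M_pos by (intro power_increasing) auto
  thus ?thesis by simp
qed

lemma image_powers_primitive: "(\<lambda>i. \<alpha> ^ i) ` {..<N} = UNIV - {0}"
  using primitive card_UNIV unfolding is_primitive_def by simp

lemma inj_on_powers_primitive: "inj_on (\<lambda>i. \<alpha> ^ i) {..<N}"
proof (rule eq_card_imp_inj_on)
  show "card ((\<lambda>i. \<alpha> ^ i) ` {..<N}) = card {..<N}"
    unfolding image_powers_primitive using card_UNIV by (simp add: card_Diff_singleton)
qed simp

lemma primitive_nonzero: "\<alpha> \<noteq> 0"
proof -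
  have "\<alpha> ^ 1 \<in> (\<lambda>i. \<alpha> ^ i) ` {..<N}" using N_ge_2 by (intro imageI) auto
  thus ?thesis unfolding image_powers_primitive by simp
qed

lemma power_primitive_N: "\<alpha> ^ N = 1"
  using power_card_minus_1[OF card_UNIV primitive_nonzero] .

lemma power_primitive_mod: "\<alpha> ^ a = \<alpha> ^ (a mod N)"
proof -
  have "\<alpha> ^ a = \<alpha> ^ (N * (a div N) + a mod N)" by (metis div_mult_mod_eq mult.commute)
  also have "\<dots> = (\<alpha> ^ N) ^ (a div N) * \<alpha> ^ (a mod N)" by (simp only: power_add power_mult)
  finally show ?thesis by (simp only: power_primitive_N power_one mult_1)
qed

lemma power_primitive_eq_iff: "\<alpha> ^ a = \<alpha> ^ b \<longleftrightarrow> a mod N = b mod N"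
proof
  assume "\<alpha> ^ a = \<alpha> ^ b"
  hence "\<alpha> ^ (a mod N) = \<alpha> ^ (b mod N)" using power_primitive_mod by metis
  moreover have "a mod N \<in> {..<N}" "b mod N \<in> {..<N}" using N_ge_2 by auto
  ultimately show "a mod N = b mod N" using inj_on_powers_primitive unfolding inj_on_def by blast
qed (metis power_primitive_mod)

lemma power_primitive_eq_iff_less: "a < N \<Longrightarrow> b < N \<Longrightarrow> \<alpha> ^ a = \<alpha> ^ b \<longleftrightarrow> a = b"
  using power_primitive_eq_iff by simp

lemma ex_power_primitive: "x \<noteq> 0 \<Longrightarrow> \<exists>i<N. x = \<alpha> ^ i"
  using image_powers_primitive by (metis (no_types, lifting) DiffI UNIV_I empty_iff image_iff
      insert_iff lessThan_iff)

lemma power_primitive_half: "\<alpha> ^ (N div 2) = -1"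
proof -
  have "even N" by simp
  hence "(\<alpha> ^ (N div 2))\<^sup>2 = 1" using power_primitive_N
    by (metis dvd_mult_div_cancel power_mult mult.commute)
  moreover have "\<alpha> ^ (N div 2) \<noteq> \<alpha> ^ 0"
    using N_ge_2 by (subst power_primitive_eq_iff_less) auto
  ultimately show ?thesis using power2_eq_1_iff by fastforce
qed

lemma power_primitive_div_notin_prime_subfield:
  assumes "3 \<le> d" "d dvd N"
  shows "\<alpha> ^ (N div d) \<notin> prime_subfield"
proof -
  have "N div d \<le> N div 3" using assms(1) by (intro div_le_mono2) auto
  moreover have "3 * (N div 3) \<le> N" "N = 2 * (N div 2)" by simp_all
  ultimately have half: "N div d < N div 2" using N_ge_2 by linarith
  have "N div d \<noteq> 0" using assms N_ge_2 by (auto simp: dvd_div_eq_0_iff)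
  moreover have "N div 2 < N" "N div d < N" using half N_ge_2 by linarith+
  ultimately have "\<alpha> ^ (N div d) \<noteq> \<alpha> ^ 0" "\<alpha> ^ (N div d) \<noteq> \<alpha> ^ (N div 2)"
    using half by (subst power_primitive_eq_iff_less; simp)+
  thus ?thesis
    using primitive_nonzero power_primitive_half by (simp add: prime_subfield_char_3)
qed

lemma power_3_power_less_N: "k < M \<Longrightarrow> (3::nat) ^ k < N"
proof -
  assume "k < M"
  hence "3 * 3 ^ k \<le> (3::nat) ^ M" using power_increasing[of "Suc k" M "3::nat"] by simp
  moreover have "(1::nat) \<le> 3 ^ k" by simp
  ultimately show ?thesis by linarith
qed

lemma inj_on_conjugates_primitive: "inj_on (\<lambda>k. \<alpha> ^ (3 ^ k)) {..<M}"
proof (rule inj_onI)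
  fix j k assume "j \<in> {..<M}" "k \<in> {..<M}" "\<alpha> ^ (3 ^ j) = \<alpha> ^ (3 ^ k)"
  hence "(3::nat) ^ j = 3 ^ k" using power_primitive_eq_iff_less power_3_power_less_N by auto
  thus "j = k" by simp
qed

lemma degree_minpoly3_primitive: "degree (minpoly3 \<alpha>) = M"
  by (rule degree_minpoly3_eq_if_inj_on[OF card_UNIV inj_on_conjugates_primitive])

lemma roots_minpoly3_primitive: "{x. poly (minpoly3 \<alpha>) x = 0} = (\<lambda>k. \<alpha> ^ (3 ^ k)) ` {..<M}"
proof (rule sym, rule card_seteq)
  show "finite {x. poly (minpoly3 \<alpha>) x = 0}"
    by (rule poly_roots_finite[OF minpoly3_nonzero[OF card_UNIV]])
  show "(\<lambda>k. \<alpha> ^ (3 ^ k)) ` {..<M} \<subseteq> {x. poly (minpoly3 \<alpha>) x = 0}"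
    by (auto intro: poly_minpoly3_frobenius[OF card_UNIV])
  have "card ((\<lambda>k. \<alpha> ^ (3 ^ k)) ` {..<M}) = M"
    using inj_on_conjugates_primitive by (simp add: card_image)
  thus "card {x. poly (minpoly3 \<alpha>) x = 0} \<le> card ((\<lambda>k. \<alpha> ^ (3 ^ k)) ` {..<M})"
    using card_poly_roots_bound[OF minpoly3_nonzero[OF card_UNIV], of \<alpha>]
    by (simp add: degree_minpoly3_primitive)
qed

section \<open>The cyclic code\<close>

context
  fixes h :: nat
  assumes h_pos: "1 \<le> h" and h_less: "h < M"
begin

abbreviation (input) e :: nat where "e \<equiv> 3 ^ h - 1"

abbreviation (input) generator :: "'a poly" where "generator \<equiv> minpoly3 \<alpha> * minpoly3 (\<alpha> ^ e)"

abbreviation (input) code :: "'a poly set" where "code \<equiv> cyclic_code generator N"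

lemma e_less_N: "e < N"
proof -
  have "(3::nat) ^ h < 3 ^ M" using h_less by (intro power_strict_increasing) auto
  thus ?thesis by (simp add: diff_less_mono)
qed

lemma power_e_mult_3_power_neq:
  assumes "j < k" "k < M"
  shows "\<alpha> ^ (e * 3 ^ j) \<noteq> \<alpha> ^ (e * 3 ^ k)"
proof
  assume "\<alpha> ^ (e * 3 ^ j) = \<alpha> ^ (e * 3 ^ k)"
  hence "(e * 3 ^ j) mod N = (e * 3 ^ k) mod N" by (simp only: power_primitive_eq_iff)
  moreover have "e * 3 ^ j \<le> e * 3 ^ k" using assms by (intro mult_le_mono2 power_increasing) auto
  ultimately have "N dvd e * 3 ^ k - e * 3 ^ j" using mod_eq_dvd_iff_nat by metis
  moreover have "e * 3 ^ k - e * 3 ^ j = 3 ^ j * (e * (3 ^ (k - j) - 1))"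
  proof -
    have "(3::nat) ^ k = 3 ^ j * 3 ^ (k - j)" using assms by (simp flip: power_add)
    hence "e * 3 ^ k - e * 3 ^ j = 3 ^ j * (e * 3 ^ (k - j)) - 3 ^ j * e" by (simp only: mult_ac)
    also have "\<dots> = 3 ^ j * (e * 3 ^ (k - j) - e)" by (rule diff_mult_distrib2[symmetric])
    also have "e * 3 ^ (k - j) - e = e * (3 ^ (k - j) - 1)" by (simp only: diff_mult_distrib2 mult_1_right)
    finally show ?thesis .
  qed
  moreover have "coprime N (3 ^ j)"
    using coprime_power_power_minus_1[of 3 M j] M_pos by (simp add: coprime_commute)
  ultimately have "N dvd e * (3 ^ (k - j) - 1)" by (simp add: coprime_dvd_mult_right_iff)
  moreover have "\<not> N dvd e * (3 ^ (k - j) - 1)"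
    by (rule not_dvd_3_power_minus_1_mult) (use assms h_pos h_less in auto)
  ultimately show False by blast
qed

lemma degree_minpoly3_power_e: "degree (minpoly3 (\<alpha> ^ e)) = M"
proof (rule degree_minpoly3_eq_if_inj_on[OF card_UNIV], rule inj_onI, rule ccontr)
  fix j k assume "j \<in> {..<M}" "k \<in> {..<M}" "(\<alpha> ^ e) ^ (3 ^ j) = (\<alpha> ^ e) ^ (3 ^ k)" "j \<noteq> k"
  moreover from this(3) have "\<alpha> ^ (e * 3 ^ j) = \<alpha> ^ (e * 3 ^ k)" by (simp only: power_mult)
  ultimately show False
    using power_e_mult_3_power_neq[of j k] power_e_mult_3_power_neq[of k j] by (auto simp: linorder_neq_iff)
qed

lemma poly_minpoly3_primitive_power_e: "poly (minpoly3 \<alpha>) (\<alpha> ^ e) \<noteq> 0"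
proof
  assume "poly (minpoly3 \<alpha>) (\<alpha> ^ e) = 0"
  then obtain k where "k < M" "\<alpha> ^ e = \<alpha> ^ (3 ^ k)" using roots_minpoly3_primitive by blast
  hence "e = 3 ^ k" using power_primitive_eq_iff_less e_less_N power_3_power_less_N by blast
  moreover have "even e" "odd ((3::nat) ^ k)" using h_pos by simp_all
  ultimately show False by simp
qed

lemma over_gf3_generator: "over_gf3 generator"
  by (intro over_gf3_mult over_gf3_minpoly3[OF card_UNIV])

lemma lead_coeff_generator: "lead_coeff generator = 1"
  by (simp add: lead_coeff_mult lead_coeff_minpoly3[OF card_UNIV])

lemma generator_nonzero: "generator \<noteq> 0"
  using lead_coeff_generator by auto

lemma degree_generator: "degree generator = 2 * M"
  using degree_minpoly3_primitive degree_minpoly3_power_e minpoly3_nonzero[OF card_UNIV]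
  by (simp add: degree_mult_eq)

lemma mem_code_iff:
  "c \<in> code \<longleftrightarrow> over_gf3 c \<and> degree c < N \<and> poly c \<alpha> = 0 \<and> poly c (\<alpha> ^ e) = 0"
proof
  assume "c \<in> code"
  thus "over_gf3 c \<and> degree c < N \<and> poly c \<alpha> = 0 \<and> poly c (\<alpha> ^ e) = 0"
    unfolding cyclic_code_def using poly_minpoly3[OF card_UNIV] by (auto elim!: dvdE)
next
  assume c: "over_gf3 c \<and> degree c < N \<and> poly c \<alpha> = 0 \<and> poly c (\<alpha> ^ e) = 0"
  have "minpoly3 \<alpha> dvd c" using c by (intro minpoly3_dvd[OF card_UNIV]) auto
  then obtain f where f: "over_gf3 f" "c = minpoly3 \<alpha> * f"
    using over_gf3_quotient[OF over_gf3_minpoly3[OF card_UNIV] lead_coeff_minpoly3[OF card_UNIV]] c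
    by blast
  have "poly f (\<alpha> ^ e) = 0" using c f poly_minpoly3_primitive_power_e by simp
  hence "minpoly3 (\<alpha> ^ e) dvd f" using f by (intro minpoly3_dvd[OF card_UNIV])
  thus "c \<in> code" using c f unfolding cyclic_code_def by simp
qed

lemma code_eq_image: "code = (\<lambda>f. generator * f) ` gf3_polys_below (N - 2 * M)"
proof (intro equalityI subsetI)
  fix c assume "c \<in> code"
  hence c: "over_gf3 c" "degree c < N" "generator dvd c" unfolding cyclic_code_def by auto
  obtain f where f: "over_gf3 f" "c = generator * f"
    using over_gf3_quotient[OF over_gf3_generator lead_coeff_generator c(1,3)] by blast
  have "degree f < N - 2 * M" if "f \<noteq> 0"
  proof -
    have "degree c = degree generator + degree f"
      unfolding f(2) by (rule degree_mult_eq[OF generator_nonzero that])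
    thus ?thesis using c(2) degree_generator by linarith
  qed
  hence "coeff f i = 0" if "N - 2 * M \<le> i" for i
    using that by (cases "f = 0") (auto intro: coeff_eq_0)
  hence "f \<in> gf3_polys_below (N - 2 * M)" unfolding gf3_polys_below_def using f(1) by simp
  thus "c \<in> (\<lambda>f. generator * f) ` gf3_polys_below (N - 2 * M)" using f by blast
next
  fix c assume "c \<in> (\<lambda>f. generator * f) ` gf3_polys_below (N - 2 * M)"
  then obtain f where f: "f \<in> gf3_polys_below (N - 2 * M)" "c = generator * f" by blast
  have "degree c < N"
  proof (cases "f = 0")
    case False
    have "\<forall>i \<ge> N - 2 * M. coeff f i = 0" using f(1) unfolding gf3_polys_below_def by simp
    moreover have "coeff f (degree f) \<noteq> 0" using False by simp
    ultimately have "degree f < N - 2 * M" using not_less by blast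
    moreover have "degree c = degree generator + degree f"
      unfolding f(2) by (rule degree_mult_eq[OF generator_nonzero False])
    ultimately show ?thesis using degree_generator by linarith
  next
    case True
    thus ?thesis using f(2) N_ge_2 by simp
  qed
  moreover have "over_gf3 f" using f(1) unfolding gf3_polys_below_def by simp
  hence "over_gf3 c" unfolding f(2) by (rule over_gf3_mult[OF over_gf3_generator])
  ultimately show "c \<in> code" using f unfolding cyclic_code_def by simp
qed

lemma card_code: "card code = 3 ^ (N - 2 * M)"
proof -
  have "inj_on (\<lambda>f. generator * f) (gf3_polys_below (N - 2 * M))"
    by (rule inj_onI) (simp add: minpoly3_nonzero[OF card_UNIV])
  thus ?thesis unfolding code_eq_image by (simp add: card_image card_gf3_polys_below)
qed

lemma finite_code: "finite code"
  unfolding code_eq_image using finite_gf3_polys_below by simp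

section \<open>Weights of codewords\<close>

lemma codeword_coeff:
  assumes "c \<in> code" "coeff c i \<noteq> 0"
  shows "coeff c i \<in> {1, -1}" "i < N"
proof -
  show "coeff c i \<in> {1, -1}"
    using assms mem_code_iff unfolding over_gf3_def prime_subfield_char_3 by auto
  have "i \<le> degree c" using assms(2) by (rule le_degree)
  thus "i < N" using assms(1) mem_code_iff by simp
qed

lemma codeword_relations:
  assumes "c \<in> code"
  shows "(\<Sum>i | coeff c i \<noteq> 0. coeff c i * \<alpha> ^ i) = 0"
    "(\<Sum>i | coeff c i \<noteq> 0. coeff c i * (\<alpha> ^ i) ^ e) = 0"
  using assms mem_code_iff poly_eq_sum_support[of c]
  by (simp_all add: mult.commute flip: power_mult)

lemma power_primitive_support_inj:
  assumes "c \<in> code" "coeff c i \<noteq> 0" "coeff c j \<noteq> 0" "i \<noteq> j"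
  shows "\<alpha> ^ i \<noteq> \<alpha> ^ j"
  using assms codeword_coeff(2)[OF assms(1)] power_primitive_eq_iff_less by metis

lemma hamming_weight_codeword_ge_3:
  assumes c: "c \<in> code" "c \<noteq> 0"
  shows "3 \<le> hamming_weight c"
proof (rule ccontr)
  define S where "S = {i. coeff c i \<noteq> 0}"
  have relations: "(\<Sum>i\<in>S. coeff c i * \<alpha> ^ i) = 0" "(\<Sum>i\<in>S. coeff c i * (\<alpha> ^ i) ^ e) = 0"
    using codeword_relations[OF c(1)] unfolding S_def .
  assume "\<not> 3 \<le> hamming_weight c"
  moreover have "degree c \<in> S" using c(2) unfolding S_def by simp
  hence "0 < card S" unfolding card_gt_0_iff S_def using finite_support_coeff by blast
  ultimately have "card S = 1 \<or> card S = 2" unfolding hamming_weight_def S_def by linarith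
  thus False
  proof
    assume "card S = 1"
    then obtain i where S: "S = {i}" by (rule card_1_singletonE)
    hence "coeff c i \<noteq> 0" unfolding S_def by blast
    moreover have "coeff c i * \<alpha> ^ i = 0" using relations(1) unfolding S by simp
    ultimately show False using primitive_nonzero by simp
  next
    assume "card S = 2"
    then obtain i j where S: "S = {i, j}" "i \<noteq> j" by (meson card_2_iff)
    hence ij: "coeff c i \<noteq> 0" "coeff c j \<noteq> 0" unfolding S_def by blast+
    show False
    proof (rule no_two_term_relation[OF h_pos])
      show "coeff c i \<in> {1, -1}" "coeff c j \<in> {1, -1}" using codeword_coeff(1)[OF c(1)] ij by auto
      show "\<alpha> ^ i \<noteq> 0" using primitive_nonzero by simp
      show "\<alpha> ^ i \<noteq> \<alpha> ^ j" using power_primitive_support_inj[OF c(1) ij S(2)] .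
      show "coeff c i * \<alpha> ^ i + coeff c j * \<alpha> ^ j = 0"
        using relations(1) S by simp
      show "coeff c i * (\<alpha> ^ i) ^ e + coeff c j * (\<alpha> ^ j) ^ e = 0"
        using relations(2) S by simp
    qed
  qed
qed

lemma exceptional_of_weight_3_codeword:
  assumes c: "c \<in> code" "hamming_weight c = 3"
  shows "(\<exists>y::'a. y \<notin> prime_subfield \<and> y ^ (3 ^ h) = y) \<or>
         (\<exists>y::'a. y \<notin> prime_subfield \<and> y ^ (3 ^ h) = - (y ^ 2))"
proof -
  define S where "S = {i. coeff c i \<noteq> 0}"
  have relations: "(\<Sum>i\<in>S. coeff c i * \<alpha> ^ i) = 0" "(\<Sum>i\<in>S. coeff c i * (\<alpha> ^ i) ^ e) = 0"
    using codeword_relations[OF c(1)] unfolding S_def .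
  obtain i j k where S: "S = {i, j, k}" "i \<noteq> j" "j \<noteq> k" "i \<noteq> k"
    using c(2) unfolding hamming_weight_def S_def[symmetric] by (meson card_3_iff)
  hence ijk: "coeff c i \<noteq> 0" "coeff c j \<noteq> 0" "coeff c k \<noteq> 0" unfolding S_def by blast+
  show ?thesis
  proof (rule exceptional_of_three_term_relation[OF h_pos])
    show "coeff c i \<in> {1, -1}" "coeff c j \<in> {1, -1}" "coeff c k \<in> {1, -1}"
      using codeword_coeff(1)[OF c(1)] ijk by auto
    show "\<alpha> ^ i \<noteq> 0" "\<alpha> ^ j \<noteq> 0" "\<alpha> ^ k \<noteq> 0" using primitive_nonzero by simp_all
    show "\<alpha> ^ i \<noteq> \<alpha> ^ j" "\<alpha> ^ i \<noteq> \<alpha> ^ k" "\<alpha> ^ j \<noteq> \<alpha> ^ k"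
      using power_primitive_support_inj[OF c(1)] ijk S(2-4) by simp_all
    show "coeff c i * \<alpha> ^ i + coeff c j * \<alpha> ^ j + coeff c k * \<alpha> ^ k = 0"
      using relations(1) S by (simp add: add.assoc)
    show "coeff c i * (\<alpha> ^ i) ^ e + coeff c j * (\<alpha> ^ j) ^ e + coeff c k * (\<alpha> ^ k) ^ e = 0"
      using relations(2) S by (simp add: add.assoc)
  qed
qed

lemma weight_3_codeword_of_relation:
  fixes c1 c2 c3 x1 x2 x3 :: 'a
  assumes c: "c1 \<in> {1, -1}" "c2 \<in> {1, -1}" "c3 \<in> {1, -1}"
    and x0: "x1 \<noteq> 0" "x2 \<noteq> 0" "x3 \<noteq> 0" and dist: "distinct [x1, x2, x3]"
    and relation: "c1 * x1 + c2 * x2 + c3 * x3 = 0"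
    and relation_e: "c1 * x1 ^ e + c2 * x2 ^ e + c3 * x3 ^ e = 0"
  shows "\<exists>c\<in>code. hamming_weight c = 3"
proof -
  obtain i1 i2 i3 where i: "i1 < N" "i2 < N" "i3 < N"
    and x: "x1 = \<alpha> ^ i1" "x2 = \<alpha> ^ i2" "x3 = \<alpha> ^ i3"
    using ex_power_primitive x0 by metis
  define p where "p = monom c1 i1 + monom c2 i2 + monom c3 i3"
  have "distinct [i1, i2, i3]" using dist x by auto
  hence "hamming_weight p = 3" unfolding p_def using c by (intro hamming_weight_trinomial) auto
  moreover have "over_gf3 p"
    unfolding p_def using c by (intro over_gf3_add over_gf3_monom) (auto simp: prime_subfield_char_3)
  moreover have "degree p \<le> N - 1" using i by (intro degree_le) (auto simp: p_def coeff_monom)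
  hence "degree p < N" using N_ge_2 by linarith
  moreover have poly_p: "poly p y = c1 * y ^ i1 + c2 * y ^ i2 + c3 * y ^ i3" for y
    by (simp add: p_def poly_monom)
  hence "poly p \<alpha> = 0" "poly p (\<alpha> ^ e) = 0"
    using relation relation_e unfolding x by (simp_all add: mult.commute flip: power_mult)
  ultimately show ?thesis using mem_code_iff by blast
qed

lemma weight_3_codeword_of_exceptional:
  assumes "(\<exists>y::'a. y \<notin> prime_subfield \<and> y ^ (3 ^ h) = y) \<or>
           (\<exists>y::'a. y \<notin> prime_subfield \<and> y ^ (3 ^ h) = - (y ^ 2))"
  shows "\<exists>c\<in>code. hamming_weight c = 3"
  using assms
proof (elim disjE exE conjE)
  fix y :: 'a assume "y \<notin> prime_subfield" "y ^ (3 ^ h) = y"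
  hence y: "y \<noteq> 0" "y \<noteq> 1" "y \<noteq> -1" by (auto simp: prime_subfield_char_3)
  show ?thesis
  proof (rule weight_3_codeword_of_relation[of 1 1 1 y "-1 - y" 1])
    have "y \<noteq> -1 - y"
    proof
      assume "y = -1 - y"
      hence "2 * y = -1" by (simp add: algebra_simps)
      thus False using y(2) two_eq_minus_1 by simp
    qed
    moreover have "-1 - y \<noteq> 1"
    proof
      assume "-1 - y = 1"
      hence "y = -2" by (simp add: algebra_simps eq_neg_iff_add_eq_0)
      thus False using y(2) two_eq_minus_1 by simp
    qed
    ultimately show "distinct [y, -1 - y, 1]" using y by auto
    show "1 * y ^ e + 1 * (-1 - y) ^ e + 1 * 1 ^ e = 0"
      using frobenius_fixed_relation[OF h_pos \<open>y ^ (3 ^ h) = y\<close> y(1,3)] by simp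
  qed (use y in \<open>auto simp: diff_eq_eq\<close>)
next
  fix y :: 'a assume "y \<notin> prime_subfield" "y ^ (3 ^ h) = - (y ^ 2)"
  hence y: "y \<noteq> 0" "y \<noteq> 1" "y \<noteq> -1" by (auto simp: prime_subfield_char_3)
  show ?thesis
  proof (rule weight_3_codeword_of_relation[of 1 "-1" 1 y "1 + y" 1])
    show "1 * y ^ e + -1 * (1 + y) ^ e + 1 * 1 ^ e = 0"
      using frobenius_neg_square_relation[OF h_pos \<open>y ^ (3 ^ h) = - (y ^ 2)\<close> y(1,3)] by simp
  qed (use y in \<open>auto simp: add_eq_0_iff\<close>)
qed

lemma ex_codeword_weight_le_4: "\<exists>c\<in>code. c \<noteq> 0 \<and> hamming_weight c \<le> 4"
proof -
  have "(3::nat) ^ M \<ge> 3 ^ 2" using h_pos h_less by (intro power_increasing) auto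
  hence "N \<ge> 8" by simp
  hence "(N + 1) * (N + 1) < 2 * (N * (N - 1))" by (rule square_Suc_less_twice_mult_pred)
  also have "\<dots> = card (signed_binomials N :: 'a poly set)" by (rule card_signed_binomials[symmetric])
  also have "(N + 1) * (N + 1) = card (UNIV :: ('a \<times> 'a) set)"
    using card_UNIV by (simp flip: UNIV_Times_UNIV add: card_cartesian_product)
  finally have "card (UNIV :: ('a \<times> 'a) set) < card (signed_binomials N)" .
  hence "\<not> inj_on (\<lambda>p. (poly p \<alpha>, poly p (\<alpha> ^ e))) (signed_binomials N)"
    using card_inj_on_le[of _ _ UNIV] by fastforce
  then obtain p q where pq: "p \<in> signed_binomials N" "q \<in> signed_binomials N" "p \<noteq> q"
      "poly p \<alpha> = poly q \<alpha>" "poly p (\<alpha> ^ e) = poly q (\<alpha> ^ e)"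
    unfolding inj_on_def by blast
  have "p - q \<in> code"
    unfolding mem_code_iff using pq signed_binomialsD[OF pq(1)] signed_binomialsD[OF pq(2)]
    by (auto intro: over_gf3_diff degree_diff_less)
  moreover have "hamming_weight (p - q) \<le> 4"
    using hamming_weight_diff_le[of p q] signed_binomialsD(3)[OF pq(1)] signed_binomialsD(3)[OF pq(2)]
    by linarith
  moreover have "p - q \<noteq> 0" using pq(3) by simp
  ultimately show ?thesis by blast
qed

lemma min_distance_code_eq_4_iff: "min_distance code = 4 \<longleftrightarrow> \<not> (\<exists>c\<in>code. hamming_weight c = 3)"
proof -
  define W where "W = hamming_weight ` (code - {0})"
  have "finite W" unfolding W_def using finite_code by simp
  have W_ge_3: "3 \<le> w" if "w \<in> W" for w
    using that hamming_weight_codeword_ge_3 unfolding W_def by blast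
  obtain c where c: "c \<in> code" "c \<noteq> 0" "hamming_weight c \<le> 4"
    using ex_codeword_weight_le_4 by blast
  show ?thesis
  proof
    assume "min_distance code = 4"
    hence "Min W = 4" unfolding min_distance_def W_def .
    show "\<not> (\<exists>c\<in>code. hamming_weight c = 3)"
    proof
      assume "\<exists>c\<in>code. hamming_weight c = 3"
      then obtain c where "c \<in> code" "hamming_weight c = 3" by blast
      moreover from this have "c \<noteq> 0" by (auto simp: hamming_weight_def)
      ultimately have "3 \<in> W" unfolding W_def by force
      thus False using Min_le[OF \<open>finite W\<close>] \<open>Min W = 4\<close> by fastforce
    qed
  next
    assume no_3: "\<not> (\<exists>c\<in>code. hamming_weight c = 3)"
    have W_ge_4: "4 \<le> w" if "w \<in> W" for w
      using that W_ge_3[OF that] no_3 unfolding W_def by force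
    have "hamming_weight c \<in> W" unfolding W_def using c by blast
    hence "4 \<in> W" using W_ge_4 c(3) by (metis le_antisym)
    hence "Min W = 4" using \<open>finite W\<close> W_ge_4 by (intro Min_eqI) auto
    thus "min_distance code = 4" unfolding min_distance_def W_def .
  qed
qed

lemma frobenius_fixed_outside_prime_subfield_iff:
  "(\<exists>y::'a. y \<notin> prime_subfield \<and> y ^ (3 ^ h) = y) \<longleftrightarrow> gcd h M \<noteq> 1"
proof
  assume "\<exists>y::'a. y \<notin> prime_subfield \<and> y ^ (3 ^ h) = y"
  then obtain y :: 'a where y: "y \<notin> prime_subfield" "y ^ (3 ^ h) = y" by blast
  show "gcd h M \<noteq> 1"
  proof
    assume "gcd h M = 1"
    hence "y ^ 3 = y" using fixed_power_power_gcd[OF y(2) power_card_eq_self[OF card_UNIV]] by simp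
    thus False using prime_subfield_if_cube_eq y(1) by blast
  qed
next
  assume "gcd h M \<noteq> 1"
  define g where "g = gcd h M"
  have "g \<noteq> 0" "g \<noteq> 1" unfolding g_def using M_pos \<open>gcd h M \<noteq> 1\<close> by simp_all
  hence "(3::nat) ^ g \<ge> 3 ^ 2" by (intro power_increasing) auto
  hence D: "3 \<le> (3::nat) ^ g - 1" by simp
  have D_dvd: "3 ^ g - 1 dvd N" by (rule power_minus_1_dvd_power_minus_1) (auto simp: g_def)
  define y where "y = \<alpha> ^ (N div (3 ^ g - 1))"
  have "y ^ (3 ^ g - 1) = 1"
    unfolding y_def using D_dvd power_primitive_N by (simp flip: power_mult)
  hence "y ^ (3 ^ g) = y" by (metis power_Suc2 mult_1 Suc_pred' zero_less_power zero_less_numeral)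
  moreover obtain q where "h = g * q" unfolding g_def by (meson dvdE gcd_dvd1)
  ultimately have "y ^ (3 ^ h) = y" using fixed_power_power_mult by blast
  moreover have "y \<notin> prime_subfield"
    unfolding y_def by (rule power_primitive_div_notin_prime_subfield[OF D D_dvd])
  ultimately show "\<exists>y::'a. y \<notin> prime_subfield \<and> y ^ (3 ^ h) = y" by blast
qed

lemma odd_3_power_minus_2: "odd ((3::nat) ^ h - 2)"
proof -
  have "(3::nat) ^ h = (3 ^ h - 2) + 2" using power_increasing[of 1 h "3::nat"] h_pos by simp
  moreover have "odd ((3::nat) ^ h)" by simp
  ultimately show ?thesis by (metis even_add even_numeral)
qed

lemma power_3_power_eq_mult_square: "(y::'a) ^ (3 ^ h) = y ^ (3 ^ h - 2) * y ^ 2"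
proof -
  have "(3::nat) ^ h = (3 ^ h - 2) + 2" using power_increasing[of 1 h "3::nat"] h_pos by simp
  thus ?thesis by (metis power_add)
qed

lemma frobenius_neg_square_outside_prime_subfield_iff:
  "(\<exists>y::'a. y \<notin> prime_subfield \<and> y ^ (3 ^ h) = - (y ^ 2)) \<longleftrightarrow> gcd (3 ^ h - 2) N \<noteq> 1"
proof
  assume "\<exists>y::'a. y \<notin> prime_subfield \<and> y ^ (3 ^ h) = - (y ^ 2)"
  then obtain y :: 'a where y: "y \<notin> prime_subfield" "y ^ (3 ^ h) = - (y ^ 2)" by blast
  have "y \<noteq> 0" using y(1) by (auto simp: prime_subfield_char_3)
  have "y ^ (3 ^ h - 2) * y ^ 2 = (-1) * y ^ 2" using y(2) power_3_power_eq_mult_square by simp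
  hence "y ^ (3 ^ h - 2) = -1" using \<open>y \<noteq> 0\<close> mult_right_cancel by (metis zero_eq_power2)
  hence "(- y) ^ (3 ^ h - 2) = 1" using odd_3_power_minus_2 by (simp add: power_minus_odd)
  moreover have "(- y) ^ N = 1" using power_card_minus_1[OF card_UNIV] \<open>y \<noteq> 0\<close> by simp
  ultimately have "(- y) ^ gcd (3 ^ h - 2) N = 1" by (rule power_gcd_eq_1)
  moreover have "y \<noteq> -1" using y(1) by (auto simp: prime_subfield_char_3)
  ultimately show "gcd (3 ^ h - 2) N \<noteq> 1" by (auto simp: minus_equation_iff)
next
  assume "gcd (3 ^ h - 2) N \<noteq> 1"
  define g where "g = gcd (3 ^ h - 2) N"
  have "odd g" unfolding g_def using odd_3_power_minus_2 by (meson dvd_trans gcd_dvd1)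
  moreover have "g \<noteq> 0" unfolding g_def using N_ge_2 gcd_eq_0_iff by (metis not_numeral_le_zero)
  ultimately have g: "3 \<le> g" using \<open>gcd (3 ^ h - 2) N \<noteq> 1\<close> unfolding g_def by presburger
  have g_dvd: "g dvd 3 ^ h - 2" "g dvd N" unfolding g_def by simp_all
  define u where "u = \<alpha> ^ (N div g)"
  obtain k where "3 ^ h - 2 = g * k" using g_dvd(1) by blast
  hence "(N div g) * (3 ^ h - 2) = N * k" using g_dvd(2) by (metis dvd_div_mult_self mult.assoc mult.commute)
  hence "u ^ (3 ^ h - 2) = 1" unfolding u_def using power_primitive_N by (simp flip: power_mult add: power_mult)
  hence "(- u) ^ (3 ^ h) = - ((- u) ^ 2)"
    using power_3_power_eq_mult_square[of u] frobenius_minus[of u h] by simp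
  moreover have "u \<notin> prime_subfield"
    unfolding u_def by (rule power_primitive_div_notin_prime_subfield[OF g g_dvd(2)])
  hence "- u \<notin> prime_subfield" using prime_subfield_uminus by force
  ultimately show "\<exists>y::'a. y \<notin> prime_subfield \<and> y ^ (3 ^ h) = - (y ^ 2)" by blast
qed

lemma ternary_code_params_code_iff:
  "ternary_code_params code (N - 2 * M) 4 \<longleftrightarrow> gcd h M = 1 \<and> gcd (3 ^ h - 2) N = 1"
proof -
  have "ternary_code_params code (N - 2 * M) 4 \<longleftrightarrow> \<not> (\<exists>c\<in>code. hamming_weight c = 3)"
    unfolding ternary_code_params_def using card_code min_distance_code_eq_4_iff by simp
  also have "\<dots> \<longleftrightarrow> \<not> ((\<exists>y::'a. y \<notin> prime_subfield \<and> y ^ (3 ^ h) = y) \<or>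
                        (\<exists>y::'a. y \<notin> prime_subfield \<and> y ^ (3 ^ h) = - (y ^ 2)))"
    using exceptional_of_weight_3_codeword weight_3_codeword_of_exceptional by blast
  also have "\<dots> \<longleftrightarrow> gcd h M = 1 \<and> gcd (3 ^ h - 2) N = 1"
    unfolding frobenius_fixed_outside_prime_subfield_iff frobenius_neg_square_outside_prime_subfield_iff
    by simp
  finally show ?thesis .
qed

end

end

end

theorem theorem8:
  fixes \<alpha> :: "'a::{field,finite}" and m h :: nat
  assumes "card (UNIV :: 'a set) = 3 ^ m"
    and "m \<ge> 2"
    and "1 \<le> h" and "h \<le> m - 1"
    and "is_primitive \<alpha>"
  shows "ternary_code_params
           (cyclic_code (minpoly3 \<alpha> * minpoly3 (\<alpha> ^ (3 ^ h - 1))) (3 ^ m - 1))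
           (3 ^ m - 1 - 2 * m) 4
         \<longleftrightarrow> gcd h m = 1 \<and> gcd (3 ^ h - 2 :: nat) (3 ^ m - 1) = 1"
proof -
  have "CHAR('a) = 3" by (rule CHAR_eq_3_if_card[OF assms(1)]) (use assms(2) in simp)
  moreover have "1 \<le> m" "h < m" using assms(2-4) by simp_all
  ultimately show ?thesis by (intro ternary_code_params_code_iff) (use assms in simp_all)
qed

end
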